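(* Let $n\ge1$, let $X_r\sim\mathrm{Beta}(1/2,1/2)$ and let $Y_r$ be the output of the binomial channel with $n$ trials and input $X_r$. Then \[ \mathbb E\!\left[\log\!\Big(nX_r(1-X_r)+\tfrac1{12}\Big)\right]=2\log\!\left(\frac{1+\sqrt{3n+1}}{4\sqrt3}\right), \] and the Shannon entropy of $Y_r$ satisfies \[ H(Y_r)\ \ge\ \log\frac{\pi}{4}+\psi(n+1), \] where $\psi$ is the digamma function.
   Context: All logarithms are natural. The binomial channel with $n$ trials has transition law $P_{Y|X}(y|x)=\binom{n}{y}x^y(1-x)^{n-y}$, $x\in[0,1]$, $y\in\{0,\dots,n\}$. $\mathrm{Beta}(1/2,1/2)$ has density $\frac{1}{\pi\sqrt{x(1-x)}}$ on $(0,1)$; the induced output pmf is $P_{Y_r}(y)=\frac{\Gamma(y+1/2)\Gamma(n-y+1/2)}{\pi\,\Gamma(y+1)\Gamma(n-y+1)}$. $H(Y)=-\sum_y P_Y(y)\log P_Y(y)$. *)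

theory Defs
  imports "HOL-Analysis.Analysis"
begin

definition arcsine_density :: "real \<Rightarrow> real" where
  "arcsine_density x = 1 / (pi * sqrt (x * (1 - x)))"

definition arcsine_expect :: "(real \<Rightarrow> real) \<Rightarrow> real" where
  "arcsine_expect g = (LBINT x:{0<..<1}. arcsine_density x * g x)"

text \<open>Output pmf of the binomial channel with n trials and input X_r ~ Beta(1/2,1/2).\<close>
definition P_Yr :: "nat \<Rightarrow> nat \<Rightarrow> real" where
  "P_Yr n y = Gamma (real y + 1/2) * Gamma (real n - real y + 1/2)
              / (pi * Gamma (real y + 1) * Gamma (real n - real y + 1))"

definition H_Yr :: "nat \<Rightarrow> real" where
  "H_Yr n = - (\<Sum>y\<in>{0..n}. P_Yr n y * ln (P_Yr n y))"

end

(* Y_r has the Beta(1/2,1/2)-binomial law P(y) = w(y) w(n - y) / pi with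
   w(a) = Gamma(a + 1/2) / Gamma(a + 1).  By convexity of ln Gamma, -ln w(a) >= psi(a + 1/2) / 2,
   so H(Y_r) = E[-ln P(Y_r)] >= ln pi + E[psi(Y_r + 1/2)]; the Polya urn recursion in n shows
   E[psi(Y_r + 1/2)] = psi(n + 1) - 2 ln 2.

   X_r has the law of (1 - cos(pi U)) / 2 with U uniform on [0, 1].  After this substitution
   n X_r (1 - X_r) + 1/12 becomes c |1 - r exp(2 pi i U)|^2 with constants c > 0, 0 <= r < 1,
   and ln |1 - r z| has mean zero over the unit circle by Cauchy's integral formula for
   Ln (1 - r z), leaving E[...] = ln c. *)

theory Submission
  imports Defs "HOL-Complex_Analysis.Complex_Analysis"
begin

lemma Gamma_plus1_pos: "x > 0 \<Longrightarrow> Gamma (x + 1 :: real) = x * Gamma x"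
  by (rule Gamma_plus1) (auto elim!: nonpos_Ints_cases)

definition Gamma_half_ratio :: "real \<Rightarrow> real" where
  "Gamma_half_ratio a = Gamma (a + 1/2) / Gamma (a + 1)"

lemma Gamma_half_ratio_pos: "a > -1/2 \<Longrightarrow> Gamma_half_ratio a > 0"
  unfolding Gamma_half_ratio_def by simp

lemma Gamma_half_ratio_plus1:
  assumes "a > -1/2"
  shows "Gamma_half_ratio (a + 1) * (a + 1) = Gamma_half_ratio a * (a + 1/2)"
proof -
  have "Gamma (a + 1 + 1/2) = (a + 1/2) * Gamma (a + 1/2)"
    using Gamma_plus1_pos[of "a + 1/2"] assms by (simp add: add_ac)
  moreover have "Gamma (a + 1 + 1) = (a + 1) * Gamma (a + 1)"
    using Gamma_plus1_pos[of "a + 1"] assms by simp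
  moreover have "Gamma (a + 1) > 0" "a + 1 > 0"
    using assms by simp_all
  ultimately show ?thesis
    unfolding Gamma_half_ratio_def by simp
qed

lemma P_Yr_eq_Gamma_half_ratio: "P_Yr n y = Gamma_half_ratio y * Gamma_half_ratio (real n - real y) / pi"
  unfolding P_Yr_def Gamma_half_ratio_def by simp

lemma P_Yr_pos: "y \<le> n \<Longrightarrow> P_Yr n y > 0"
  unfolding P_Yr_eq_Gamma_half_ratio by (simp add: Gamma_half_ratio_pos)

lemma P_Yr_symmetric: "y \<le> n \<Longrightarrow> P_Yr n (n - y) = P_Yr n y"
  unfolding P_Yr_eq_Gamma_half_ratio by (simp add: of_nat_diff)

lemma P_Yr_Suc_failure:
  assumes "y \<le> n"
  shows "P_Yr (Suc n) y * (real n - real y + 1) = P_Yr n y * (real n - real y + 1/2)"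
proof -
  have "real (Suc n) - real y = (real n - real y) + 1"
    by simp
  moreover have "Gamma_half_ratio (real n - real y + 1) * (real n - real y + 1)
      = Gamma_half_ratio (real n - real y) * (real n - real y + 1/2)"
    using Gamma_half_ratio_plus1[of "real n - real y"] assms by simp
  ultimately show ?thesis
    unfolding P_Yr_eq_Gamma_half_ratio by (metis mult.assoc mult.commute times_divide_eq_left)
qed

lemma P_Yr_Suc_success:
  "P_Yr (Suc n) (Suc y) * (real y + 1) = P_Yr n y * (real y + 1/2)"
  using Gamma_half_ratio_plus1[of "real y"]
  unfolding P_Yr_eq_Gamma_half_ratio by (simp add: add_ac)

(* One more trial is a Polya urn step: given Y = y after n trials, the next trial succeeds
   with probability (y + 1/2) / (n + 1). *)
lemma sum_P_Yr_Suc: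
  "(\<Sum>y\<in>{0..Suc n}. P_Yr (Suc n) y * f y) * (real n + 1) =
   (\<Sum>y\<in>{0..n}. P_Yr n y * ((real n - real y + 1/2) * f y + (real y + 1/2) * f (Suc y)))"
proof -
  have "(\<Sum>y\<in>{0..Suc n}. P_Yr (Suc n) y * f y) * (real n + 1) =
     (\<Sum>y\<in>{0..Suc n}. P_Yr (Suc n) y * (real n - real y + 1) * f y) +
     (\<Sum>y\<in>{0..Suc n}. P_Yr (Suc n) y * real y * f y)"
    by (simp only: sum_distrib_right flip: sum.distrib) (rule sum.cong; simp add: algebra_simps)
  also have "(\<Sum>y\<in>{0..Suc n}. P_Yr (Suc n) y * (real n - real y + 1) * f y) =
      (\<Sum>y\<in>{0..n}. P_Yr n y * (real n - real y + 1/2) * f y)"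
    using P_Yr_Suc_failure by (simp add: sum.atLeast0_atMost_Suc)
  also have "(\<Sum>y\<in>{0..Suc n}. P_Yr (Suc n) y * real y * f y) =
      (\<Sum>y\<in>{0..n}. P_Yr (Suc n) (Suc y) * (real y + 1) * f (Suc y))"
    by (simp only: sum.atLeast0_atMost_Suc_shift) (simp add: add_ac)
  also have "\<dots> = (\<Sum>y\<in>{0..n}. P_Yr n y * (real y + 1/2) * f (Suc y))"
    using P_Yr_Suc_success by (intro sum.cong) auto
  finally show ?thesis
    by (simp add: algebra_simps flip: sum.distrib)
qed

lemma sum_P_Yr: "(\<Sum>y\<in>{0..n}. P_Yr n y) = 1"
proof (induction n)
  case 0
  show ?case by (simp add: P_Yr_def Gamma_one_half_real)
next
  case (Suc n)
  have "(\<Sum>y\<in>{0..Suc n}. P_Yr (Suc n) y * 1) * (real n + 1) = real n + 1"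
    unfolding sum_P_Yr_Suc using Suc by (simp add: algebra_simps sum.distrib flip: sum_distrib_left)
  then show ?case by simp
qed

lemma sum_P_Yr_Digamma: "(\<Sum>y\<in>{0..n}. P_Yr n y * Digamma (real y + 1/2)) = Digamma (real n + 1) - 2 * ln 2"
proof (induction n)
  case 0
  show ?case by (simp add: P_Yr_def Gamma_one_half_real Digamma_one_half)
next
  case (Suc n)
  have Digamma_Suc: "Digamma (real (Suc y) + 1/2) = Digamma (real y + 1/2) + 1 / (real y + 1/2)" for y
    using Digamma_plus1[of "real y + 1/2"] by (simp add: add_ac)
  have "(\<Sum>y\<in>{0..Suc n}. P_Yr (Suc n) y * Digamma (real y + 1/2)) * (real n + 1)
     = (\<Sum>y\<in>{0..n}. P_Yr n y * ((real n + 1) * Digamma (real y + 1/2) + 1))"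
    unfolding sum_P_Yr_Suc Digamma_Suc by (intro sum.cong refl) (simp add: field_simps)
  also have "\<dots> = (real n + 1) * (\<Sum>y\<in>{0..n}. P_Yr n y * Digamma (real y + 1/2)) + 1"
    using sum_P_Yr[of n] by (simp add: algebra_simps sum.distrib sum_distrib_left)
  finally have "(\<Sum>y\<in>{0..Suc n}. P_Yr (Suc n) y * Digamma (real y + 1/2)) =
      (\<Sum>y\<in>{0..n}. P_Yr n y * Digamma (real y + 1/2)) + 1 / (real n + 1)"
    by (simp add: field_simps)
  moreover have "Digamma (real (Suc n) + 1) = Digamma (real n + 1) + 1 / (real n + 1)"
    using Digamma_plus1[of "real n + 1"] by (simp add: add_ac)
  ultimately show ?case
    using Suc by simp
qed

lemma sum_P_Yr_Digamma_reflected: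
  "(\<Sum>y\<in>{0..n}. P_Yr n y * Digamma (real n - real y + 1/2)) = Digamma (real n + 1) - 2 * ln 2"
proof -
  have "(\<Sum>y\<in>{0..n}. P_Yr n y * Digamma (real n - real y + 1/2)) =
        (\<Sum>y\<in>{0..n}. P_Yr n (n - y) * Digamma (real n - real (n - y) + 1/2))"
    by (subst sum.atLeastAtMost_rev) simp
  also have "\<dots> = (\<Sum>y\<in>{0..n}. P_Yr n y * Digamma (real y + 1/2))"
    by (intro sum.cong refl) (simp add: P_Yr_symmetric of_nat_diff)
  finally show ?thesis
    using sum_P_Yr_Digamma by simp
qed

lemma ln_Gamma_increment_ge:
  fixes a h :: real
  assumes "a > 0" "h > 0"
  shows "h * Digamma a \<le> ln (Gamma (a + h)) - ln (Gamma a)"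
proof -
  have "\<exists>z. a < z \<and> z < a + h \<and> ln_Gamma (a + h) - ln_Gamma a = (a + h - a) * Digamma z"
    by (rule MVT2) (use assms in \<open>auto intro!: has_field_derivative_ln_Gamma_real\<close>)
  then obtain z where z: "a < z" "ln_Gamma (a + h) - ln_Gamma a = h * Digamma z"
    by auto
  have "Digamma a \<le> Digamma z"
    using z assms by (intro Digamma_real_mono) auto
  then show ?thesis
    using z assms by (simp add: ln_Gamma_real_pos mult_left_mono)
qed

lemma ln_Gamma_half_ratio_le:
  assumes "a > -1/2"
  shows "ln (Gamma_half_ratio a) \<le> - Digamma (a + 1/2) / 2"
proof -
  have "Gamma (a + 1/2) > 0" "Gamma (a + 1) > 0"
    using assms by simp_all
  then have "ln (Gamma_half_ratio a) = ln (Gamma (a + 1/2)) - ln (Gamma (a + 1/2 + 1/2))"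
    unfolding Gamma_half_ratio_def by (simp add: ln_div add.assoc)
  then show ?thesis
    using ln_Gamma_increment_ge[of "a + 1/2" "1/2"] assms by simp
qed

lemma minus_ln_P_Yr_ge:
  assumes "y \<le> n"
  shows "- ln (P_Yr n y) \<ge> ln pi + (Digamma (real y + 1/2) + Digamma (real n - real y + 1/2)) / 2"
proof -
  have "- ln (P_Yr n y) = ln pi - ln (Gamma_half_ratio y) - ln (Gamma_half_ratio (real n - real y))"
    unfolding P_Yr_eq_Gamma_half_ratio
    using Gamma_half_ratio_pos[of y] Gamma_half_ratio_pos[of "real n - real y"] assms
    by (simp add: ln_div ln_mult)
  then show ?thesis
    using ln_Gamma_half_ratio_le[of y] ln_Gamma_half_ratio_le[of "real n - real y"] assms by simp
qed

lemma H_Yr_ge: "H_Yr n \<ge> ln (pi / 4) + Digamma (real n + 1)"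
proof -
  have "H_Yr n = (\<Sum>y\<in>{0..n}. P_Yr n y * (- ln (P_Yr n y)))"
    unfolding H_Yr_def by (simp add: sum_negf)
  also have "\<dots> \<ge> (\<Sum>y\<in>{0..n}. P_Yr n y *
      (ln pi + (Digamma (real y + 1/2) + Digamma (real n - real y + 1/2)) / 2))"
    by (intro sum_mono mult_left_mono minus_ln_P_Yr_ge) (auto intro: less_imp_le P_Yr_pos)
  moreover have "(\<Sum>y\<in>{0..n}. P_Yr n y *
      (ln pi + (Digamma (real y + 1/2) + Digamma (real n - real y + 1/2)) / 2))
      = ln pi * (\<Sum>y\<in>{0..n}. P_Yr n y) + (\<Sum>y\<in>{0..n}. P_Yr n y * Digamma (real y + 1/2)) / 2
        + (\<Sum>y\<in>{0..n}. P_Yr n y * Digamma (real n - real y + 1/2)) / 2"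
    by (simp add: algebra_simps add_divide_distrib sum.distrib sum_distrib_left sum_divide_distrib)
  ultimately have "H_Yr n \<ge> ln pi + Digamma (real n + 1) - 2 * ln 2"
    unfolding sum_P_Yr sum_P_Yr_Digamma sum_P_Yr_Digamma_reflected by simp
  moreover have "ln (pi / 4) = ln pi - 2 * ln 2"
    using ln_realpow[of 2 2] by (simp add: ln_div)
  ultimately show ?thesis by simp
qed

lemma set_integrable_arcsine_density: "set_integrable lborel {0<..<1::real} arcsine_density"
proof -
  define F where "F x = arcsin (2 * x - 1) / pi" for x :: real
  have F_cont: "continuous_on {0..1} F"
    unfolding F_def by (intro continuous_intros) auto
  have "set_integrable lborel (einterval (ereal 0) (ereal 1)) arcsine_density"
  proof (rule interval_integral_FTC_nonneg(1)[where F = F and A = "F 0" and B = "F 1"])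
    fix x assume "ereal 0 < ereal x" "ereal x < ereal 1"
    then have x: "0 < x" "x < 1" by auto
    have "sqrt (1 - (2 * x - 1)^2) = 2 * sqrt (x * (1 - x))"
      using real_sqrt_mult[of 4 "x * (1 - x)"] by (simp add: power2_eq_square algebra_simps)
    moreover have "(F has_real_derivative inverse (sqrt (1 - (2 * x - 1)^2)) * 2 / pi) (at x)"
      unfolding F_def using x by (auto intro!: derivative_eq_intros DERIV_arcsin[THEN DERIV_chain2])
    ultimately show "(F has_real_derivative arcsine_density x) (at x)"
      by (simp add: arcsine_density_def field_simps)
    show "isCont arcsine_density x"
      unfolding arcsine_density_def using x by (intro continuous_intros) auto
  next
    show "AE x in lborel. ereal 0 < ereal x \<longrightarrow> ereal x < ereal 1 \<longrightarrow> 0 \<le> arcsine_density x"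
      by (intro AE_I2) (auto simp: arcsine_density_def)
    show "((F \<circ> real_of_ereal) \<longlongrightarrow> F 0) (at_right (ereal 0))"
      unfolding ereal_tendsto_simps using continuous_on_Icc_at_rightD[OF F_cont] by simp
    show "((F \<circ> real_of_ereal) \<longlongrightarrow> F 1) (at_left (ereal 1))"
      unfolding ereal_tendsto_simps using continuous_on_Icc_at_leftD[OF F_cont] by simp
  qed simp
  then show ?thesis by simp
qed

lemma set_integrable_arcsine_density_mult:
  assumes h: "continuous_on {0..1} h"
  shows "set_integrable lborel {0<..<1::real} (\<lambda>x. arcsine_density x * h x)"
proof -
  obtain B where B: "\<forall>x\<in>{0..1}. \<bar>h x\<bar> \<le> B"
    using compact_imp_bounded[OF compact_continuous_image[OF h compact_Icc]]
    by (auto simp: bounded_iff)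
  have cont: "continuous_on {0<..<1} (\<lambda>x. arcsine_density x * h x)"
    unfolding arcsine_density_def
    by (intro continuous_intros continuous_on_subset[OF h]) auto
  have meas: "set_borel_measurable lborel {0<..<1} (\<lambda>x. arcsine_density x * h x)"
    unfolding set_borel_measurable_def using borel_measurable_continuous_on_indicator[OF _ cont] by simp
  have int: "set_integrable lborel {0<..<1} (\<lambda>x. B * arcsine_density x)"
    using set_integrable_arcsine_density by simp
  have bound: "norm (arcsine_density x * h x) \<le> norm (B * arcsine_density x)"
    if "x \<in> {0<..<1}" for x
  proof -
    have "\<bar>h x\<bar> \<le> B"
      using B that by simp
    then have "\<bar>h x\<bar> \<le> \<bar>B\<bar>"
      by linarith
    moreover have dens: "arcsine_density x \<ge> 0"
      using that by (simp add: arcsine_density_def)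
    ultimately have "arcsine_density x * \<bar>h x\<bar> \<le> arcsine_density x * \<bar>B\<bar>"
      by (rule mult_left_mono)
    then show ?thesis
      using dens by (simp add: abs_mult mult.commute)
  qed
  show ?thesis
    by (rule set_integrable_bound[OF int meas]) (intro AE_I2 impI bound)
qed

lemma arcsine_density_cos_jacobian:
  assumes "0 < t" "t < 1"
  shows "pi / 2 * sin (pi * t) * arcsine_density ((1 - cos (pi * t)) / 2) = 1"
proof -
  have "sin (pi * t) > 0"
    using assms by (intro sin_gt_zero) auto
  moreover have "(1 - cos (pi * t)) / 2 * (1 - (1 - cos (pi * t)) / 2) = (1 - (cos (pi * t))^2) / 4"
    by (simp add: field_simps power2_eq_square)
  then have "(1 - cos (pi * t)) / 2 * (1 - (1 - cos (pi * t)) / 2) = (sin (pi * t) / 2)^2"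
    by (simp add: sin_squared_eq power_divide)
  ultimately show ?thesis
    unfolding arcsine_density_def by simp
qed

lemma half_versine_in_unit_interval:
  assumes "0 < t" "t < 1"
  shows "(1 - cos (pi * t)) / 2 \<in> {0<..<1}"
proof -
  have "cos (pi * t) < 1" "cos (pi * t) > -1"
    using assms cos_monotone_0_pi[of 0 "pi * t"] cos_monotone_0_pi[of "pi * t" pi] by auto
  then show ?thesis
    by auto
qed

lemma continuous_on_half_versine_comp:
  assumes "continuous_on {0..1} h"
  shows "continuous_on {0..1} (\<lambda>t. h ((1 - cos (pi * t)) / 2))"
  by (intro continuous_on_compose2[OF assms] continuous_intros) auto

lemma interval_integral_arcsine_substitution:
  assumes h: "continuous_on {0..1} h"
  shows "(LBINT x=ereal 0..ereal 1. arcsine_density x * h x)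
       = (LBINT t=ereal 0..ereal 1. h ((1 - cos (pi * t)) / 2))"
proof -
  define g where "g t = (1 - cos (pi * t)) / 2" for t :: real
  define g' where "g' t = pi / 2 * sin (pi * t)" for t :: real
  have jacobian: "g' t *\<^sub>R (arcsine_density (g t) * h (g t)) = h (g t)" if "0 < t" "t < 1" for t
    using arcsine_density_cos_jacobian[OF that] unfolding g_def g'_def by simp
  have "(LBINT x=ereal 0..ereal 1. arcsine_density x * h x)
      = (LBINT t=ereal 0..ereal 1. g' t *\<^sub>R (arcsine_density (g t) * h (g t)))"
  proof (rule interval_integral_substitution_integrable)
    fix t assume "ereal 0 < ereal t" "ereal t < ereal 1"
    then have g_t: "g t \<in> {0<..<1}"
      unfolding g_def by (intro half_versine_in_unit_interval) auto
    show "(g has_real_derivative g' t) (at t)"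
      unfolding g_def g'_def by (auto intro!: derivative_eq_intros)
    show "isCont g' t"
      unfolding g'_def by (intro continuous_intros)
    have "isCont h (g t)"
      using g_t by (intro continuous_on_interior[OF h]) auto
    then show "isCont (\<lambda>x. arcsine_density x * h x) (g t)"
      unfolding arcsine_density_def using g_t by (intro continuous_intros) auto
  next
    fix t assume "ereal 0 \<le> ereal t" "ereal t \<le> ereal 1"
    then show "0 \<le> g' t"
      unfolding g'_def by (auto intro!: mult_nonneg_nonneg sin_ge_zero)
  next
    have "continuous_on {0..1} g"
      unfolding g_def by (intro continuous_intros) simp
    then have "(g \<longlongrightarrow> g 0) (at_right 0)" "(g \<longlongrightarrow> g 1) (at_left 1)"
      by (simp_all add: continuous_on_Icc_at_rightD continuous_on_Icc_at_leftD)
    then show "((ereal \<circ> g \<circ> real_of_ereal) \<longlongrightarrow> ereal 0) (at_right (ereal 0))"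
      and "((ereal \<circ> g \<circ> real_of_ereal) \<longlongrightarrow> ereal 1) (at_left (ereal 1))"
      unfolding ereal_tendsto_simps by (simp_all add: g_def)
  next
    have "set_integrable lborel {0<..<1} (\<lambda>t. h (g t))"
      using continuous_on_half_versine_comp[OF h] unfolding g_def
      by (intro set_integrable_subset[OF borel_integrable_atLeastAtMost']) auto
    then show "set_integrable lborel (einterval (ereal 0) (ereal 1))
        (\<lambda>t. g' t *\<^sub>R (arcsine_density (g t) * h (g t)))"
      by (subst set_integrable_cong[OF refl refl, where f' = "\<lambda>t. h (g t)"])
        (auto simp: jacobian simp del: real_scaleR_def)
    show "set_integrable lborel (einterval (ereal 0) (ereal 1)) (\<lambda>x. arcsine_density x * h x)"
      using set_integrable_arcsine_density_mult[OF h] by simp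
  qed simp
  also have "\<dots> = (LBINT t=ereal 0..ereal 1. h (g t))"
    by (simp add: interval_integral_Ioo del: real_scaleR_def)
      (rule set_lebesgue_integral_cong; simp add: jacobian del: real_scaleR_def)
  finally show ?thesis
    unfolding g_def .
qed

lemma arcsine_expect_eq_integral_cos:
  assumes h: "continuous_on {0..1} h"
  shows "arcsine_expect h = integral {0..1} (\<lambda>t. h ((1 - cos (pi * t)) / 2))"
proof -
  have "arcsine_expect h = (LBINT t=ereal 0..ereal 1. h ((1 - cos (pi * t)) / 2))"
    unfolding arcsine_expect_def interval_integral_arcsine_substitution[OF h, symmetric]
    by (simp add: interval_integral_Ioo)
  also have "\<dots> = integral {0..1} (\<lambda>t. h ((1 - cos (pi * t)) / 2))"
    by (rule interval_integral_eq_integral)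
      (simp_all add: borel_integrable_atLeastAtMost' continuous_on_half_versine_comp[OF h])
  finally show ?thesis .
qed

lemma has_integral_Ln_circle:
  fixes w :: complex
  assumes w: "norm w < 1"
  shows "((\<lambda>t. Ln (1 - w * exp (2 * pi * \<i> * of_real t))) has_integral 0) {0..1::real}"
proof -
  define f where "f z = Ln (1 - w * z)" for z
  have "1 - w * z \<notin> \<real>\<^sub>\<le>\<^sub>0" if "norm z \<le> 1" for z
  proof -
    have "Re (w * z) \<le> norm w * norm z"
      using complex_Re_le_cmod[of "w * z"] by (simp add: norm_mult)
    also have "\<dots> \<le> norm w"
      using that by (simp add: mult_left_le)
    also have "\<dots> < 1"
      by (fact w)
    finally show ?thesis
      by (auto simp: complex_nonpos_Reals_iff)
  qed
  then have "continuous_on (cball 0 1) f" "f holomorphic_on ball 0 1"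
    unfolding f_def by (auto intro!: continuous_intros holomorphic_intros)
  then have "((\<lambda>u. f u / (u - 0)) has_contour_integral (2 * of_real pi * \<i> * f 0)) (circlepath 0 1)"
    by (intro Cauchy_integral_circlepath) auto
  then have "((\<lambda>t. f (circlepath 0 1 t) / circlepath 0 1 t *
      vector_derivative (circlepath 0 1) (at t within {0..1})) has_integral 0) {0..1}"
    by (simp add: has_contour_integral_def f_def)
  then have "((\<lambda>t. (2 * of_real pi * \<i>) * f (exp (2 * pi * \<i> * of_real t))) has_integral 0) {0..1}"
  proof (rule has_integral_cong[THEN iffD1, rotated])
    fix t :: real assume "t \<in> {0..1}"
    then show "f (circlepath 0 1 t) / circlepath 0 1 t *
        vector_derivative (circlepath 0 1) (at t within {0..1})
        = (2 * of_real pi * \<i>) * f (exp (2 * pi * \<i> * of_real t))"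
      by (subst vector_derivative_circlepath01) (auto simp: circlepath)
  qed
  then show ?thesis
    by (simp add: has_integral_mult_right_iff f_def)
qed

lemma norm_one_minus_cis_squared:
  fixes r x :: real
  shows "(norm (1 - of_real r * cis x))^2 = 1 - 2 * r * cos x + r^2"
proof -
  have "(norm (1 - of_real r * cis x))^2 = (1 - r * cos x)^2 + (r * sin x)^2"
    unfolding cmod_power2 by simp
  then show ?thesis
    using sin_cos_squared_add[of x] by algebra
qed

lemma has_integral_ln_circle:
  fixes r :: real
  assumes r: "\<bar>r\<bar> < 1"
  shows "((\<lambda>t. ln (1 - 2 * r * cos (2 * pi * t) + r^2)) has_integral 0) {0..1}"
proof -
  define w where "w t = 1 - of_real r * exp (2 * pi * \<i> * of_real t)" for t :: real
  have "((\<lambda>t. 2 * Re (Ln (w t))) has_integral 0) {0..1}"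
    using has_integral_linear[OF has_integral_Ln_circle bounded_linear_Re, of "of_real r"] r
      has_integral_mult_right[of _ 0 "{0..1}" "2::real"]
    by (simp add: o_def w_def)
  moreover have "2 * Re (Ln (w t)) = ln (1 - 2 * r * cos (2 * pi * t) + r^2)" for t
  proof -
    have w_cis: "w t = 1 - of_real r * cis (2 * pi * t)"
      by (simp add: w_def cis_conv_exp mult_ac)
    then have "(norm (w t))^2 = 1 - 2 * r * cos (2 * pi * t) + r^2"
      by (simp add: norm_one_minus_cis_squared)
    moreover have "w t \<noteq> 0"
    proof
      assume "w t = 0"
      then have "norm (of_real r * cis (2 * pi * t)) = 1"
        unfolding w_cis by simp
      then show False
        using r by (simp add: norm_mult)
    qed
    ultimately show ?thesis
      using ln_realpow[of "norm (w t)" 2] by simp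
  qed
  ultimately show ?thesis
    by simp
qed

lemma continuous_on_ln_quadratic:
  fixes a b :: real
  assumes "a \<ge> 0" "b > 0"
  shows "continuous_on {0..1} (\<lambda>x. ln (a * x * (1 - x) + b))"
proof -
  have "a * x * (1 - x) + b > 0" if "x \<in> {0..1}" for x
    using that assms by (intro add_nonneg_pos mult_nonneg_nonneg) auto
  then show ?thesis
    by (intro continuous_intros) force
qed

lemma quadratic_versine_factorization:
  fixes p q t :: real
  assumes "q + p \<noteq> 0"
  defines "r \<equiv> (q - p) / (q + p)"
  shows "4 * (q^2 - p^2) * ((1 - cos (pi * t)) / 2) * (1 - (1 - cos (pi * t)) / 2) + p^2
       = ((p + q) / 2)^2 * (1 - 2 * r * cos (2 * pi * t) + r^2)"
    (is "?lhs = ?c * _")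
proof -
  have "(p + q) / 2 * r = (q - p) / 2"
    using assms by (simp add: r_def field_simps)
  then have "?c * r^2 = ((q - p) / 2)^2"
    by (metis power_mult_distrib)
  then have c1: "?c * (1 + r^2) = p^2 + (q^2 - p^2) / 2"
    by (simp add: power2_eq_square field_simps)
  have c2: "2 * ?c * r = (q^2 - p^2) / 2"
    using assms by (simp add: r_def power2_eq_square field_simps)
  have cos2: "cos (2 * pi * t) = 2 * (cos (pi * t))^2 - 1"
    using cos_double_cos[of "pi * t"] by (simp add: mult.assoc)
  have "?c * (1 - 2 * r * cos (2 * pi * t) + r^2) = ?c * (1 + r^2) - 2 * ?c * r * cos (2 * pi * t)"
    by (simp add: algebra_simps)
  also have "\<dots> = p^2 + (q^2 - p^2) * (1 - (cos (pi * t))^2)"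
    unfolding c1 c2 cos2 by (simp add: field_simps)
  also have "\<dots> = ?lhs"
    by (simp add: field_simps power2_eq_square)
  finally show ?thesis ..
qed

lemma arcsine_expect_ln_quadratic:
  fixes a b :: real
  assumes a: "a \<ge> 0" and b: "b > 0"
  shows "arcsine_expect (\<lambda>x. ln (a * x * (1 - x) + b)) = 2 * ln ((sqrt b + sqrt (b + a / 4)) / 2)"
proof -
  define p q where "p = sqrt b" and "q = sqrt (b + a / 4)"
  define c r where "c = ((p + q) / 2)^2" and "r = (q - p) / (q + p)"
  have p: "p > 0" and q: "q \<ge> p"
    using a b by (simp_all add: p_def q_def)
  have c_pos: "c > 0"
    using p q by (simp add: c_def)
  have r: "\<bar>r\<bar> < 1"
    using p q by (simp add: r_def abs_less_iff field_simps)
  define g where "g t = (1 - cos (pi * t)) / 2" for t :: real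
  have factor: "a * g t * (1 - g t) + b = c * (1 - 2 * r * cos (2 * pi * t) + r^2)" for t
  proof -
    have "b = p^2" "a = 4 * (q^2 - p^2)"
      using a b by (simp_all add: p_def q_def)
    then show ?thesis
      using quadratic_versine_factorization[of q p t] p q by (simp add: g_def c_def r_def)
  qed
  have "a * g t * (1 - g t) + b > 0" for t
    using a b by (intro add_nonneg_pos mult_nonneg_nonneg) (auto simp: g_def)
  then have "1 - 2 * r * cos (2 * pi * t) + r^2 > 0" for t
    using c_pos unfolding factor by (simp add: zero_less_mult_iff)
  then have "ln (a * g t * (1 - g t) + b) = ln c + ln (1 - 2 * r * cos (2 * pi * t) + r^2)" for t
    unfolding factor by (rule ln_mult_pos[OF c_pos])
  moreover have "((\<lambda>t. ln c + ln (1 - 2 * r * cos (2 * pi * t) + r^2)) has_integral ln c) {0..1}"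
    using has_integral_add[OF has_integral_const_real[of "ln c" 0 1] has_integral_ln_circle[OF r]]
    by simp
  ultimately have "arcsine_expect (\<lambda>x. ln (a * x * (1 - x) + b)) = ln c"
    using arcsine_expect_eq_integral_cos[OF continuous_on_ln_quadratic[OF a b]]
    by (simp add: g_def integral_unique)
  also have "\<dots> = 2 * ln ((p + q) / 2)"
    using p q by (simp add: c_def ln_realpow)
  finally show ?thesis
    unfolding p_def q_def .
qed

theorem mainTheorem15:
  fixes n :: nat
  assumes "n \<ge> 1"
  shows "set_integrable lborel {0<..<1::real}
           (\<lambda>x. arcsine_density x * ln (real n * x * (1 - x) + 1/12))
       \<and> arcsine_expect (\<lambda>x. ln (real n * x * (1 - x) + 1/12))
           = 2 * ln ((1 + sqrt (3 * real n + 1)) / (4 * sqrt 3))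
       \<and> H_Yr n \<ge> ln (pi / 4) + Digamma (real n + 1)"
proof (intro conjI)
  have "continuous_on {0..1} (\<lambda>x. ln (real n * x * (1 - x) + 1/12))"
    by (rule continuous_on_ln_quadratic) simp_all
  then show "set_integrable lborel {0<..<1::real} (\<lambda>x. arcsine_density x * ln (real n * x * (1 - x) + 1/12))"
    by (rule set_integrable_arcsine_density_mult)
  have "arcsine_expect (\<lambda>x. ln (real n * x * (1 - x) + 1/12))
      = 2 * ln ((sqrt (1/12) + sqrt (1/12 + real n / 4)) / 2)"
    by (rule arcsine_expect_ln_quadratic) simp_all
  also have "(sqrt (1/12) + sqrt (1/12 + real n / 4)) / 2 = (1 + sqrt (3 * real n + 1)) / (4 * sqrt 3)"
  proof -
    have "sqrt 12 = 2 * sqrt 3"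
      using real_sqrt_mult[of 4 3] by simp
    moreover have "1/12 + real n / 4 = (3 * real n + 1) / 12"
      by simp
    ultimately show ?thesis
      by (simp only: real_sqrt_divide) (simp add: add_divide_distrib)
  qed
  finally show "arcsine_expect (\<lambda>x. ln (real n * x * (1 - x) + 1/12))
      = 2 * ln ((1 + sqrt (3 * real n + 1)) / (4 * sqrt 3))" .
  show "H_Yr n \<ge> ln (pi / 4) + Digamma (real n + 1)"
    by (rule H_Yr_ge)
qed

end
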